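(* The family $\mathcal{P}^+_{gd}$ is a cofinal subfamily of $\mathcal{P}^+$ (every element of $\mathcal{P}^+$ is extended by some element of $\mathcal{P}^+_{gd}$) and has the amalgamation property: for all $p_0,p_1,p_2\in\mathcal{P}^+_{gd}$ with $p_0\subseteq p_1$ and $p_0\subseteq p_2$ there exist $p_3\in\mathcal{P}^+_{gd}$ and $\alpha\in\mathrm{Aut}(\mathbb{Q},<)$ fixing $\mathrm{Dom}(p_0)\cup\mathrm{Rng}(p_0)$ pointwise such that $p_1\subseteq p_3$ and $\alpha(p_2)\subseteq p_3$. The same holds for $\mathcal{P}^-_{gd}$ and $\mathcal{P}^-$.
   Context: $\mathcal{P}$ is the set of finite partial isomorphisms of $(\mathbb{Q},<)$ (order-preserving bijections between finite subsets), ordered by extension $\subseteq$; for $\alpha\in\mathrm{Aut}(\mathbb{Q},<)$, $\alpha(p)$ has graph $\{(\alpha(x),\alpha(y)):(x,y)\in\mathrm{Graph}(p)\}$. For $a\in\mathrm{Dom}(p)\cup\mathrm{Rng}(p)$, the parity $\wp_p(a)$ is the sign ($+,0,-$) of $p(a)-a$ if $a\in\mathrm{Dom}(p)$, or of $a-p^{-1}(a)$ if $a\in\mathrm{Rng}(p)$. Elements $a,b\in\mathbb{Q}$ are $p$-related if $a=b$, or if $\wp_p(a)=+$ or $\wp_p(b)=+$ and one of $a\le b\le p(a)$, $b\le a\le p(b)$, $p^{-1}(a)\le b\le a$, $p^{-1}(b)\le a\le b$ holds, or if $\wp_p(a)=-$ or $\wp_p(b)=-$ and one of $a\le b\le p^{-1}(a)$,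 $b\le a\le p^{-1}(b)$, $p(a)\le b\le a$, $p(b)\le a\le b$ holds (when defined). The $\sim_p$-classes of the equivalence relation generated by $p$-relatedness are $p$-orbitals; those meeting $\mathrm{Dom}(p)\cup\mathrm{Rng}(p)$ are colored $p$-orbitals, with parity given by $\wp_p$. $\mathcal{P}^+$ ($\mathcal{P}^-$) is the set of $p\in\mathcal{P}$ all of whose colored $p$-orbitals have parity $+$ (resp. $-$). A bad pair of $p$ is a pair $a<a'$ of elements of $\mathrm{Dom}(p)\cup\mathrm{Rng}(p)$ such that either the colored $p$-orbitals of $a,a'$ (possibly equal) and all colored $p$-orbitals between them have parity $+$ and $p(a)$ and $p^{-1}(a')$ are undefined, or they all have parity $-$ and $p(a')$ and $p^{-1}(a)$ are undefined. $\mathcal{P}^+_{gd}$ ($\mathcal{P}^-_{gd}$) is the set of $p\in\mathcal{P}^+$ (resp. $\mathcal{P}^-$) with a single colored $p$-orbital and no bad pairs. *)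

theory Defs
  imports Main "HOL.Rat"
begin

text \<open>Extension of partial isomorphisms is map inclusion (graph inclusion).\<close>

type_synonym pmap = "rat \<rightharpoonup> rat"

definition fin_piso :: "pmap \<Rightarrow> bool" where
  "fin_piso p \<longleftrightarrow> finite (dom p) \<and>
     (\<forall>x\<in>dom p. \<forall>y\<in>dom p. x < y \<longrightarrow> the (p x) < the (p y))"

definition is_aut :: "(rat \<Rightarrow> rat) \<Rightarrow> bool" where
  "is_aut \<alpha> \<longleftrightarrow> bij \<alpha> \<and> strict_mono \<alpha>"

text \<open>alpha(p): graph {(alpha x, alpha y) | (x,y) in graph p}.\<close>
definition aut_apply :: "(rat \<Rightarrow> rat) \<Rightarrow> pmap \<Rightarrow> pmap" where
  "aut_apply \<alpha> p = (\<lambda>z. map_option \<alpha> (p (inv \<alpha> z)))"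

definition DR :: "pmap \<Rightarrow> rat set" where
  "DR p = dom p \<union> ran p"

text \<open>p^{-1}(b), meaningful for b in Rng(p).\<close>
definition pinv :: "pmap \<Rightarrow> rat \<Rightarrow> rat" where
  "pinv p b = (THE a. p a = Some b)"

text \<open>Parity (+,0,- encoded as 1,0,-1), meaningful for a in Dom(p) \<union> Rng(p).\<close>
definition parity :: "pmap \<Rightarrow> rat \<Rightarrow> rat" where
  "parity p a = (if a \<in> dom p then sgn (the (p a) - a) else sgn (a - pinv p a))"

definition has_par :: "pmap \<Rightarrow> rat \<Rightarrow> rat \<Rightarrow> bool" where
  "has_par p s a \<longleftrightarrow> a \<in> DR p \<and> parity p a = s"

definition p_related :: "pmap \<Rightarrow> rat \<Rightarrow> rat \<Rightarrow> bool" where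
  "p_related p a b \<longleftrightarrow> a = b
    \<or> ((has_par p 1 a \<or> has_par p 1 b) \<and>
        ((a \<in> dom p \<and> a \<le> b \<and> b \<le> the (p a)) \<or>
         (b \<in> dom p \<and> b \<le> a \<and> a \<le> the (p b)) \<or>
         (a \<in> ran p \<and> pinv p a \<le> b \<and> b \<le> a) \<or>
         (b \<in> ran p \<and> pinv p b \<le> a \<and> a \<le> b)))
    \<or> ((has_par p (-1) a \<or> has_par p (-1) b) \<and>
        ((a \<in> ran p \<and> a \<le> b \<and> b \<le> pinv p a) \<or>
         (b \<in> ran p \<and> b \<le> a \<and> a \<le> pinv p b) \<or>
         (a \<in> dom p \<and> the (p a) \<le> b \<and> b \<le> a) \<or>
         (b \<in> dom p \<and> the (p b) \<le> a \<and> a \<le> b)))"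

definition orbital :: "pmap \<Rightarrow> rat \<Rightarrow> rat set" where
  "orbital p a = {b. (equivclp (p_related p)) a b}"

definition colored_orbitals :: "pmap \<Rightarrow> rat set set" where
  "colored_orbitals p = {orbital p a | a. a \<in> DR p}"

definition orbital_parity :: "pmap \<Rightarrow> rat set \<Rightarrow> rat \<Rightarrow> bool" where
  "orbital_parity p Ob s \<longleftrightarrow> (\<forall>a\<in>Ob \<inter> DR p. parity p a = s)"

definition Psgn :: "rat \<Rightarrow> pmap set" where
  "Psgn s = {p. fin_piso p \<and> (\<forall>Ob\<in>colored_orbitals p. orbital_parity p Ob s)}"

definition bad_pair :: "pmap \<Rightarrow> rat \<Rightarrow> rat \<Rightarrow> bool" where
  "bad_pair p a a' \<longleftrightarrow> a \<in> DR p \<and> a' \<in> DR p \<and> a < a' \<and>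
    (((\<forall>Ob\<in>colored_orbitals p. (a \<in> Ob \<or> a' \<in> Ob \<or> (\<exists>c\<in>Ob. a \<le> c \<and> c \<le> a'))
          \<longrightarrow> orbital_parity p Ob 1) \<and> a \<notin> dom p \<and> a' \<notin> ran p)
     \<or> ((\<forall>Ob\<in>colored_orbitals p. (a \<in> Ob \<or> a' \<in> Ob \<or> (\<exists>c\<in>Ob. a \<le> c \<and> c \<le> a'))
          \<longrightarrow> orbital_parity p Ob (-1)) \<and> a' \<notin> dom p \<and> a \<notin> ran p))"

definition Pgd :: "rat \<Rightarrow> pmap set" where
  "Pgd s = {p. p \<in> Psgn s \<and> card (colored_orbitals p) = 1 \<and> (\<forall>a a'. \<not> bad_pair p a a')}"

abbreviation "Pplus \<equiv> Psgn 1"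
abbreviation "Pminus \<equiv> Psgn (-1)"
abbreviation "Pplus_gd \<equiv> Pgd 1"
abbreviation "Pminus_gd \<equiv> Pgd (-1)"

definition cofinal_in :: "pmap set \<Rightarrow> pmap set \<Rightarrow> bool" where
  "cofinal_in Q P \<longleftrightarrow> Q \<subseteq> P \<and> (\<forall>p\<in>P. \<exists>q\<in>Q. p \<subseteq>\<^sub>m q)"

definition amalgamation :: "pmap set \<Rightarrow> bool" where
  "amalgamation Q \<longleftrightarrow> (\<forall>p0\<in>Q. \<forall>p1\<in>Q. \<forall>p2\<in>Q. p0 \<subseteq>\<^sub>m p1 \<and> p0 \<subseteq>\<^sub>m p2 \<longrightarrow>
     (\<exists>p3\<in>Q. \<exists>\<alpha>. is_aut \<alpha> \<and> (\<forall>x\<in>DR p0. \<alpha> x = x) \<and>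
        p1 \<subseteq>\<^sub>m p3 \<and> aut_apply \<alpha> p2 \<subseteq>\<^sub>m p3))"

end

theory Submission
  imports Defs
begin

text \<open>A condition in P+ moves every point of its support upwards, so it is a finite union of
  increasing chains, and it lies in P+gd exactly when it is nonempty and every chain starts below
  every point where a chain ends. Hence some rational c lies above all chain starts and below all
  chain ends, and adding steps to the chains of any condition in P+ produces an extension all of
  whose chains cross such a c; this gives cofinality.

  Along the chains of a map q that straddles c in this way there is a rational coordinate: the
  first point of a chain above c gets a value in (0, 1) that increases with the point, and each
  step of q adds 1. It is strictly increasing on the support of q, conjugates q to the unit
  translation, and does not change when q is extended to another map straddling c. To amalgamate
  p1 and p2 over p0, choose c for p0, extend p1 and p2 to maps q1 and q2 straddling c, and extend
  their coordinates to automorphisms b1 and b2 of Q. Then b1\<inverse> b2 fixes the support of p0 and moves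
  p2 into the fixed point free automorphism x \<mapsto> b1\<inverse> (b1 x + 1), which also contains p1; so
  the union lies in P+ and extends into P+gd. The statements for P- follow by reflection in 0.\<close>

lemma exists_between_avoiding:
  fixes A B F :: "'a::{dense_linorder,no_top,no_bot} set"
  assumes "finite A" "finite B" "finite F" "\<forall>a\<in>A. \<forall>b\<in>B. a < b"
  shows "\<exists>z. z \<notin> F \<and> (\<forall>a\<in>A. a < z) \<and> (\<forall>b\<in>B. z < b)"
proof -
  obtain lo hi where lh: "lo < hi" "\<forall>a\<in>A. a \<le> lo" "\<forall>b\<in>B. hi \<le> b"
  proof (cases "A = {}"; cases "B = {}")
    assume "A = {}" "B = {}"
    obtain lo hi :: 'a where "lo < hi" using gt_ex by blast
    then show thesis using that \<open>A = {}\<close> \<open>B = {}\<close> by blast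
  next
    assume "A = {}" "B \<noteq> {}"
    obtain lo where "lo < Min B" using lt_ex by blast
    then show thesis using that[of lo "Min B"] \<open>A = {}\<close> assms(2) by simp
  next
    assume "A \<noteq> {}" "B = {}"
    obtain hi where "Max A < hi" using gt_ex by blast
    then show thesis using that[of "Max A" hi] \<open>B = {}\<close> assms(1) by simp
  next
    assume "A \<noteq> {}" "B \<noteq> {}"
    then show thesis using that[of "Max A" "Min B"] assms by simp
  qed
  have "infinite {lo<..<hi}" using lh(1) by simp
  then have "\<not> {lo<..<hi} \<subseteq> F" using assms(3) finite_subset by blast
  then obtain z where "z \<in> {lo<..<hi}" "z \<notin> F" by blast
  then show ?thesis using lh by force
qed

lemma equivclp_if_consecutive_related:
  fixes S :: "'a::linorder set"
  assumes "finite S"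
    and "\<And>x y. x \<in> S \<Longrightarrow> y \<in> S \<Longrightarrow> x < y \<Longrightarrow> \<not> (\<exists>z\<in>S. x < z \<and> z < y) \<Longrightarrow> r x y"
  shows "\<forall>x\<in>S. \<forall>y\<in>S. equivclp r x y"
  using assms
proof (induction S rule: finite_linorder_max_induct)
  case (insert b A)
  have connected: "\<forall>x\<in>A. \<forall>y\<in>A. equivclp r x y"
  proof (rule insert.IH)
    fix x y assume "x \<in> A" "y \<in> A" "x < y" "\<not> (\<exists>z\<in>A. x < z \<and> z < y)"
    moreover have "\<not> b < y" using insert.hyps(2) \<open>y \<in> A\<close> by (simp add: not_less less_imp_le)
    ultimately show "r x y" by (intro insert.prems) auto
  qed
  have "equivclp r x b" if "x \<in> A" for x
  proof -
    have "Max A \<in> A" using insert.hyps(1) that Max_in by blast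
    then have "Max A < b" using insert.hyps(2) by blast
    moreover have "\<not> (\<exists>z\<in>insert b A. Max A < z \<and> z < b)"
      using insert.hyps(1) by (auto simp: not_less)
    ultimately have "r (Max A) b" using \<open>Max A \<in> A\<close> by (intro insert.prems) auto
    moreover have "equivclp r x (Max A)" using connected that \<open>Max A \<in> A\<close> by blast
    ultimately show ?thesis by (simp add: equivclp_into_equivclp)
  qed
  then show ?case using connected by (simp add: equivclp_sym)
qed simp

section \<open>Finite partial isomorphisms\<close>

lemma finite_DR: "fin_piso p \<Longrightarrow> finite (DR p)"
  unfolding fin_piso_def DR_def by (simp add: finite_ran)

lemma fin_piso_less:
  "fin_piso p \<Longrightarrow> p x = Some a \<Longrightarrow> p y = Some b \<Longrightarrow> x < y \<Longrightarrow> a < b"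
  unfolding fin_piso_def by (metis domI option.sel)

lemma fin_piso_less_iff:
  assumes "fin_piso p" "p x = Some a" "p y = Some b"
  shows "a < b \<longleftrightarrow> x < y"
  using fin_piso_less[OF assms] fin_piso_less[OF assms(1,3,2)] assms(2,3)
  by (cases x y rule: linorder_cases) auto

lemma pinv_eqI: "fin_piso p \<Longrightarrow> p x = Some a \<Longrightarrow> pinv p a = x"
  unfolding pinv_def by (rule the_equality) (auto, metis fin_piso_less less_irrefl linorder_neqE)

lemma fin_piso_pinv: "fin_piso p \<Longrightarrow> a \<in> ran p \<Longrightarrow> p (pinv p a) = Some a"
  unfolding ran_def using pinv_eqI by fastforce

lemma ran_map_le: "p \<subseteq>\<^sub>m q \<Longrightarrow> ran p \<subseteq> ran q"
  unfolding ran_def map_le_def by (auto, metis domI)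

lemma DR_map_le: "p \<subseteq>\<^sub>m q \<Longrightarrow> DR p \<subseteq> DR q"
  unfolding DR_def using map_le_implies_dom_le ran_map_le by blast

lemma map_le_upd_new: "a \<notin> dom p \<Longrightarrow> p \<subseteq>\<^sub>m p(a \<mapsto> b)"
  unfolding map_le_def by auto

lemma map_le_SomeD: "p \<subseteq>\<^sub>m q \<Longrightarrow> p x = Some y \<Longrightarrow> q x = Some y"
  unfolding map_le_def by (metis domI)

lemma fin_piso_upd:
  assumes "fin_piso p" "a \<notin> dom p"
    and "\<forall>x\<in>dom p. x < a \<longrightarrow> the (p x) < z" "\<forall>x\<in>dom p. a < x \<longrightarrow> z < the (p x)"
  shows "fin_piso (p(a \<mapsto> z))"
  using assms unfolding fin_piso_def by (auto simp: less_imp_neq)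

lemma fin_piso_restrict_graph:
  assumes "strict_mono_on S g" "finite S"
  shows "fin_piso ((Some \<circ> g) |` S)"
  using assms unfolding fin_piso_def strict_mono_on_def by simp

lemma map_le_restrict_graph:
  assumes "\<forall>x\<in>dom p. p x = Some (g x)" "dom p \<subseteq> S"
  shows "p \<subseteq>\<^sub>m (Some \<circ> g) |` S"
  using assms unfolding map_le_def by auto

section \<open>Conditions of positive parity\<close>

definition shifts_up :: "pmap \<Rightarrow> bool" where
  "shifts_up p \<longleftrightarrow> (\<forall>x\<in>dom p. x < the (p x))"

definition chain_starts :: "pmap \<Rightarrow> rat set" where
  "chain_starts p = DR p - ran p"

definition chain_ends :: "pmap \<Rightarrow> rat set" where
  "chain_ends p = DR p - dom p"

lemma shifts_up_pinv_less:
  "fin_piso p \<Longrightarrow> shifts_up p \<Longrightarrow> a \<in> ran p \<Longrightarrow> pinv p a < a"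
  using fin_piso_pinv unfolding shifts_up_def by force

lemma orbital_in_colored_orbitals: "a \<in> DR p \<Longrightarrow> orbital p a \<in> colored_orbitals p"
  unfolding colored_orbitals_def by blast

lemma in_orbital_self: "a \<in> orbital p a"
  unfolding orbital_def by simp

lemma Psgn_iff: "p \<in> Psgn s \<longleftrightarrow> fin_piso p \<and> (\<forall>a\<in>DR p. parity p a = s)"
  unfolding Psgn_def orbital_parity_def colored_orbitals_def
  using in_orbital_self by blast

lemma Psgn_1_iff: "p \<in> Psgn 1 \<longleftrightarrow> fin_piso p \<and> shifts_up p"
proof -
  have "(\<forall>a\<in>DR p. parity p a = 1) \<longleftrightarrow> shifts_up p" if "fin_piso p"
    using shifts_up_pinv_less[OF that] unfolding parity_def shifts_up_def DR_def
    by (auto simp: sgn_1_pos)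
  then show ?thesis using Psgn_iff by blast
qed

lemma p_relatedI_dom:
  "has_par p 1 a \<Longrightarrow> a \<in> dom p \<Longrightarrow> a \<le> b \<Longrightarrow> b \<le> the (p a) \<Longrightarrow> p_related p a b"
  unfolding p_related_def by blast

lemma p_relatedI_ran:
  "has_par p 1 b \<Longrightarrow> b \<in> ran p \<Longrightarrow> pinv p b \<le> a \<Longrightarrow> a \<le> b \<Longrightarrow> p_related p a b"
  unfolding p_related_def by blast

lemma p_related_consecutive:
  assumes "fin_piso p" "shifts_up p" "\<forall>e\<in>chain_ends p. \<forall>s\<in>chain_starts p. s < e"
    and "x \<in> DR p" "y \<in> DR p" "x < y" "\<not> (\<exists>z\<in>DR p. x < z \<and> z < y)"
  shows "p_related p x y"
proof -
  have parity: "has_par p 1 a" if "a \<in> DR p" for a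
    using assms(1,2) that Psgn_1_iff Psgn_iff unfolding has_par_def by blast
  consider "x \<in> dom p" | "y \<in> ran p" | "x \<in> chain_ends p" "y \<in> chain_starts p"
    using assms(4,5) unfolding chain_ends_def chain_starts_def by blast
  then show ?thesis
  proof cases
    case 1
    then have "x < the (p x)" "the (p x) \<in> DR p"
      using assms(2) unfolding shifts_up_def DR_def ran_def by auto
    then have "y \<le> the (p x)" using assms(7) by force
    then show ?thesis using 1 assms(4,6) parity by (intro p_relatedI_dom) auto
  next
    case 2
    then have "pinv p y < y" "pinv p y \<in> DR p"
      using shifts_up_pinv_less[OF assms(1,2)] fin_piso_pinv[OF assms(1)] unfolding DR_def
      by (auto intro: domI)
    then have "pinv p y \<le> x" using assms(7) by force
    then show ?thesis using 2 assms(5,6) parity by (intro p_relatedI_ran) auto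
  next
    case 3
    then have "y < x" using assms(3) by blast
    then show ?thesis using assms(6) by simp
  qed
qed

lemma card_colored_orbitals_eq_1:
  assumes "DR p \<noteq> {}" "\<forall>x\<in>DR p. \<forall>y\<in>DR p. equivclp (p_related p) x y"
  shows "card (colored_orbitals p) = 1"
proof -
  obtain m where m: "m \<in> DR p" using assms(1) by blast
  have "orbital p a = orbital p m" if "a \<in> DR p" for a
  proof -
    have e: "equivclp (p_related p) a m" using assms(2) m that by blast
    show ?thesis unfolding orbital_def
      using equivclp_trans[OF e] equivclp_trans[OF equivclp_sym[OF e]] by blast
  qed
  then have "colored_orbitals p = {orbital p m}"
    using m unfolding colored_orbitals_def by blast
  then show ?thesis by simp
qed

lemma Pgd_1_chain_ends_above_starts:
  assumes "p \<in> Pgd 1" "e \<in> chain_ends p" "s \<in> chain_starts p"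
  shows "s < e"
proof (rule ccontr)
  assume "\<not> s < e"
  moreover have "s \<noteq> e" using assms(2,3) unfolding chain_ends_def chain_starts_def DR_def by auto
  ultimately have "bad_pair p e s"
    using assms unfolding Pgd_def Psgn_def bad_pair_def chain_ends_def chain_starts_def by auto
  then show False using assms(1) unfolding Pgd_def by blast
qed

lemma in_Pgd_1I:
  assumes p: "fin_piso p" "shifts_up p" "DR p \<noteq> {}"
    and ordered: "\<forall>e\<in>chain_ends p. \<forall>s\<in>chain_starts p. s < e"
  shows "p \<in> Pgd 1"
proof -
  have P: "p \<in> Psgn 1" using p Psgn_1_iff by blast
  have "card (colored_orbitals p) = 1"
    using assms finite_DR p_related_consecutive
    by (intro card_colored_orbitals_eq_1 equivclp_if_consecutive_related) auto
  moreover have "\<not> bad_pair p a a'" for a a'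
  proof
    assume bad: "bad_pair p a a'"
    then have a: "a \<in> DR p" "parity p a = 1" using P Psgn_iff unfolding bad_pair_def by auto
    then have "\<not> orbital_parity p (orbital p a) (-1)"
      using in_orbital_self unfolding orbital_parity_def by force
    then have "a \<in> chain_ends p" "a' \<in> chain_starts p" "a < a'"
      using bad orbital_in_colored_orbitals[OF a(1)] in_orbital_self
      unfolding bad_pair_def chain_ends_def chain_starts_def by blast+
    then show False using ordered by force
  qed
  ultimately show "p \<in> Pgd 1" using P unfolding Pgd_def by blast
qed

lemma Pgd_1_iff:
  "p \<in> Pgd 1 \<longleftrightarrow> fin_piso p \<and> shifts_up p \<and> DR p \<noteq> {} \<and>
     (\<forall>e\<in>chain_ends p. \<forall>s\<in>chain_starts p. s < e)"
proof -
  have "DR p \<noteq> {}" if "p \<in> Pgd 1"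
    using that unfolding Pgd_def colored_orbitals_def by auto
  then show ?thesis
    using Pgd_1_chain_ends_above_starts in_Pgd_1I Psgn_1_iff unfolding Pgd_def by blast
qed

section \<open>Straddling extensions\<close>

definition straddles :: "rat \<Rightarrow> pmap \<Rightarrow> bool" where
  "straddles c p \<longleftrightarrow> fin_piso p \<and> shifts_up p \<and> c \<notin> DR p \<and>
     (\<forall>s\<in>chain_starts p. s < c) \<and> (\<forall>e\<in>chain_ends p. c < e)"

lemma straddles_in_Pgd_1: "straddles c p \<Longrightarrow> DR p \<noteq> {} \<Longrightarrow> p \<in> Pgd 1"
  unfolding straddles_def Pgd_1_iff by force

definition shifts_up_by :: "rat \<Rightarrow> pmap \<Rightarrow> bool" where
  "shifts_up_by d p \<longleftrightarrow> (\<forall>x\<in>dom p. x + d \<le> the (p x))"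

lemma exists_shifts_up_by:
  assumes "fin_piso p" "shifts_up p"
  shows "\<exists>d>0. shifts_up_by d p"
proof (cases "dom p = {}")
  case False
  let ?d = "Min ((\<lambda>x. the (p x) - x) ` dom p)"
  have "finite (dom p)" using assms(1) unfolding fin_piso_def by simp
  then have "0 < ?d" "\<forall>x\<in>dom p. ?d \<le> the (p x) - x"
    using False assms(2) unfolding shifts_up_def by auto
  then show ?thesis unfolding shifts_up_by_def by force
qed (intro exI[of _ 1], simp add: shifts_up_by_def)

lemma extend_chain_end:
  assumes p: "fin_piso p" and d: "shifts_up_by d p" and "e \<notin> dom p" "finite F"
  shows "\<exists>z. z \<notin> F \<and> e + d \<le> z \<and> fin_piso (p(e \<mapsto> z))"
proof -
  let ?A = "insert (e + d) ((\<lambda>x. the (p x)) ` {x\<in>dom p. x < e})"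
  let ?B = "(\<lambda>x. the (p x)) ` {x\<in>dom p. e < x}"
  have "finite (dom p)" using p unfolding fin_piso_def by simp
  then have fin: "finite ?A" "finite ?B" by auto
  have "\<forall>u\<in>?A. \<forall>v\<in>?B. u < v"
  proof (intro ballI)
    fix u v assume u: "u \<in> ?A" and v: "v \<in> ?B"
    from v obtain y where y: "y \<in> dom p" "e < y" "v = the (p y)" by auto
    from u consider "u = e + d" | x where "x \<in> dom p" "x < e" "u = the (p x)" by auto
    then show "u < v"
    proof cases
      case 1
      have "y + d \<le> v" using d y unfolding shifts_up_by_def by simp
      then show ?thesis using 1 y(2) by simp
    next
      case 2
      then show ?thesis using p y unfolding fin_piso_def by auto
    qed
  qed
  then obtain z where z: "z \<notin> F" "\<forall>u\<in>?A. u < z" "\<forall>v\<in>?B. z < v"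
    using exists_between_avoiding[OF fin assms(4)] by blast
  have "fin_piso (p(e \<mapsto> z))" using p assms(3) z(2,3) by (intro fin_piso_upd) auto
  then show ?thesis using z by force
qed

lemma extend_chain_start:
  assumes p: "fin_piso p" and d: "shifts_up_by d p" and s: "s \<notin> ran p" and "finite F"
  shows "\<exists>w. w \<notin> F \<and> w \<notin> dom p \<and> w + d \<le> s \<and> fin_piso (p(w \<mapsto> s))"
proof -
  let ?A = "{x\<in>dom p. the (p x) < s}"
  let ?B = "insert (s - d) {x\<in>dom p. s < the (p x)}"
  have "finite (dom p)" using p unfolding fin_piso_def by simp
  then have fin: "finite ?A" "finite ?B" "finite (F \<union> dom p)" using assms(4) by auto
  have "\<forall>u\<in>?A. \<forall>v\<in>?B. u < v"
  proof (intro ballI)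
    fix u v assume u: "u \<in> ?A" and "v \<in> ?B"
    have "u < s - d" using u d unfolding shifts_up_by_def by force
    moreover have "u < y" if "y \<in> dom p" "s < the (p y)" for y
    proof -
      have "the (p u) < the (p y)" using u that by simp
      then show ?thesis using fin_piso_less_iff[OF p, of u "the (p u)" y "the (p y)"] u that by auto
    qed
    ultimately show "u < v" using \<open>v \<in> ?B\<close> by blast
  qed
  then obtain w where w: "w \<notin> F \<union> dom p" "\<forall>u\<in>?A. u < w" "\<forall>v\<in>?B. w < v"
    using exists_between_avoiding[OF fin] by blast
  have ne: "the (p x) \<noteq> s" if "x \<in> dom p" for x
    using s that by (auto simp: ran_def)
  have "the (p x) < s" if "x \<in> dom p" "x < w" for x
  proof -
    have "\<not> s < the (p x)" using w(3) that by force
    then show ?thesis using ne[OF that(1)] by simp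
  qed
  moreover have "s < the (p x)" if "x \<in> dom p" "w < x" for x
  proof -
    have "\<not> the (p x) < s" using w(2) that by force
    then show ?thesis using ne[OF that(1)] by simp
  qed
  ultimately have "fin_piso (p(w \<mapsto> s))"
    using p w(1) by (intro fin_piso_upd) auto
  then show ?thesis using w by force
qed

lemma nat_ceiling_divide_less:
  fixes a b d :: "'a::floor_ceiling"
  assumes "0 < d" "0 < a" "b \<le> a - d"
  shows "nat \<lceil>b / d\<rceil> < nat \<lceil>a / d\<rceil>"
proof -
  have "b / d \<le> (a - d) / d" using assms by (simp add: divide_right_mono)
  also have "\<dots> = a / d - 1" using assms by (simp add: diff_divide_distrib)
  finally have "\<lceil>b / d\<rceil> \<le> \<lceil>a / d\<rceil> - 1" by (metis ceiling_diff_one ceiling_mono)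
  moreover have "0 < \<lceil>a / d\<rceil>" using assms by simp
  ultimately show ?thesis by linarith
qed

text \<open>Extending a chain end \<open>e < c\<close> by a step of length at least \<open>d\<close> lowers its summand, and so
  does extending a chain start \<open>s > c\<close> backwards.\<close>

definition straddle_defect :: "rat \<Rightarrow> rat \<Rightarrow> pmap \<Rightarrow> nat" where
  "straddle_defect c d p =
     (\<Sum>e\<in>chain_ends p. nat \<lceil>(c - e) / d\<rceil>) + (\<Sum>s\<in>chain_starts p. nat \<lceil>(s - c) / d\<rceil>)"

lemma straddle_defect_extend_end:
  assumes d: "0 < d" and p: "fin_piso p" "shifts_up_by d p" "c \<notin> DR p"
    and e: "e \<in> chain_ends p" "e < c"
  shows "\<exists>p'. p \<subseteq>\<^sub>m p' \<and> fin_piso p' \<and> shifts_up_by d p' \<and> c \<notin> DR p' \<and>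
    straddle_defect c d p' < straddle_defect c d p"
proof -
  have "e \<notin> dom p" "e \<in> ran p" using e(1) unfolding chain_ends_def DR_def by auto
  obtain z where z: "z \<notin> insert c (DR p)" "e + d \<le> z" "fin_piso (p(e \<mapsto> z))"
    using extend_chain_end[OF p(1,2) \<open>e \<notin> dom p\<close>] finite_DR[OF p(1)] by blast
  let ?p = "p(e \<mapsto> z)"
  have "z \<notin> dom p" "z \<noteq> e" using z d unfolding DR_def by auto
  have DR: "DR ?p = insert z (DR p)"
    using \<open>e \<notin> dom p\<close> \<open>e \<in> ran p\<close> unfolding DR_def by (auto simp: domIff)
  have ends: "chain_ends ?p = insert z (chain_ends p - {e})"
    using DR \<open>z \<notin> dom p\<close> \<open>z \<noteq> e\<close> unfolding chain_ends_def by auto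
  have starts: "chain_starts ?p = chain_starts p"
    using DR \<open>e \<notin> dom p\<close> z(1) unfolding chain_starts_def by (auto simp: domIff)
  have "nat \<lceil>(c - z) / d\<rceil> < nat \<lceil>(c - e) / d\<rceil>"
    using d e(2) z(2) by (intro nat_ceiling_divide_less) auto
  moreover have "z \<notin> chain_ends p" "finite (chain_ends p)"
    using z finite_DR[OF p(1)] unfolding chain_ends_def by auto
  ultimately have "straddle_defect c d ?p < straddle_defect c d p"
    unfolding straddle_defect_def ends starts using e(1) by (simp add: sum.remove)
  moreover have "shifts_up_by d ?p" using p(2) z(2) unfolding shifts_up_by_def by auto
  moreover have "p \<subseteq>\<^sub>m ?p" using map_le_upd_new[OF \<open>e \<notin> dom p\<close>] .
  moreover have "c \<notin> DR ?p" using DR z(1) p(3) by simp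
  ultimately show ?thesis using z(3) by blast
qed

lemma straddle_defect_extend_start:
  assumes d: "0 < d" and p: "fin_piso p" "shifts_up_by d p" "c \<notin> DR p"
    and s: "s \<in> chain_starts p" "c < s"
  shows "\<exists>p'. p \<subseteq>\<^sub>m p' \<and> fin_piso p' \<and> shifts_up_by d p' \<and> c \<notin> DR p' \<and>
    straddle_defect c d p' < straddle_defect c d p"
proof -
  have "s \<notin> ran p" "s \<in> dom p" using s(1) unfolding chain_starts_def DR_def by auto
  obtain w where w: "w \<notin> insert c (DR p)" "w \<notin> dom p" "w + d \<le> s" "fin_piso (p(w \<mapsto> s))"
    using extend_chain_start[OF p(1,2) \<open>s \<notin> ran p\<close>] finite_DR[OF p(1)] by blast
  let ?p = "p(w \<mapsto> s)"
  have "w \<notin> ran p" "w \<noteq> s" using w d unfolding DR_def by auto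
  have DR: "DR ?p = insert w (DR p)"
    using \<open>w \<notin> dom p\<close> \<open>s \<in> dom p\<close> unfolding DR_def by (auto simp: domIff)
  have starts: "chain_starts ?p = insert w (chain_starts p - {s})"
    using DR \<open>w \<notin> ran p\<close> \<open>w \<notin> dom p\<close> \<open>w \<noteq> s\<close> unfolding chain_starts_def
    by (auto simp: domIff)
  have ends: "chain_ends ?p = chain_ends p"
    using DR w(1) unfolding chain_ends_def by auto
  have "nat \<lceil>(w - c) / d\<rceil> < nat \<lceil>(s - c) / d\<rceil>"
    using d s(2) w(3) by (intro nat_ceiling_divide_less) auto
  moreover have "w \<notin> chain_starts p" "finite (chain_starts p)"
    using w finite_DR[OF p(1)] unfolding chain_starts_def by auto
  ultimately have "straddle_defect c d ?p < straddle_defect c d p"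
    unfolding straddle_defect_def ends starts using s(1) by (simp add: sum.remove)
  moreover have "shifts_up_by d ?p" using p(2) w(3) unfolding shifts_up_by_def by auto
  moreover have "p \<subseteq>\<^sub>m ?p" using map_le_upd_new[OF \<open>w \<notin> dom p\<close>] .
  moreover have "c \<notin> DR ?p" using DR w(1) p(3) by simp
  ultimately show ?thesis using w(4) by blast
qed

lemma straddling_extension_of_shifts_up_by:
  assumes d: "0 < d"
  shows "fin_piso p \<Longrightarrow> shifts_up_by d p \<Longrightarrow> c \<notin> DR p \<Longrightarrow> \<exists>q. p \<subseteq>\<^sub>m q \<and> straddles c q"
proof (induction "straddle_defect c d p" arbitrary: p rule: less_induct)
  case less
  consider (low_end) e where "e \<in> chain_ends p" "e < c"
    | (high_start) s where "s \<in> chain_starts p" "c < s"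
    | (none) "\<forall>e\<in>chain_ends p. \<not> e < c" "\<forall>s\<in>chain_starts p. \<not> c < s"
    by blast
  then show ?case
  proof cases
    case low_end
    then show ?thesis using straddle_defect_extend_end[OF d less.prems] less.hyps map_le_trans
      by meson
  next
    case high_start
    then show ?thesis using straddle_defect_extend_start[OF d less.prems] less.hyps map_le_trans
      by meson
  next
    case none
    have "s < c" if "s \<in> chain_starts p" for s
      using none(2) that less.prems(3) unfolding chain_starts_def
      by (cases s c rule: linorder_cases) auto
    moreover have "c < e" if "e \<in> chain_ends p" for e
      using none(1) that less.prems(3) unfolding chain_ends_def
      by (cases e c rule: linorder_cases) auto
    moreover have "shifts_up p"
      using d less.prems(2) unfolding shifts_up_by_def shifts_up_def by force
    ultimately have "straddles c p" using less.prems(1,3) unfolding straddles_def by blast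
    then show ?thesis using map_le_refl by blast
  qed
qed

lemma straddling_extension:
  assumes "fin_piso p" "shifts_up p" "c \<notin> DR p"
  shows "\<exists>q. p \<subseteq>\<^sub>m q \<and> straddles c q"
  using exists_shifts_up_by[OF assms(1,2)] straddling_extension_of_shifts_up_by assms(1,3)
  by blast

lemma Pplus_gd_cofinal:
  assumes "p \<in> Pplus"
  shows "\<exists>q\<in>Pplus_gd. p \<subseteq>\<^sub>m q"
proof -
  have p: "fin_piso p" "shifts_up p" using assms Psgn_1_iff by auto
  define a where "a = Max (insert 0 (DR p)) + 1"
  have above: "x < a" if "x \<in> DR p" for x
  proof -
    have "x \<le> Max (insert 0 (DR p))" using finite_DR[OF p(1)] that by simp
    then show ?thesis unfolding a_def by simp
  qed
  have "a \<notin> dom p" using above unfolding DR_def by blast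
  define p' where "p' = p(a \<mapsto> a + 1)"
  have "the (p x) < a + 1" "x < a" if "x \<in> dom p" for x
  proof -
    have "the (p x) \<in> DR p" "x \<in> DR p" using that unfolding DR_def ran_def by auto
    then show "the (p x) < a + 1" "x < a" using above by force+
  qed
  then have "fin_piso p'" unfolding p'_def
    using \<open>a \<notin> dom p\<close> p(1) by (intro fin_piso_upd) (auto dest: less_asym)
  moreover have "shifts_up p'" using p(2) unfolding p'_def shifts_up_def by simp
  moreover have DR': "DR p' = {a, a + 1} \<union> DR p"
    using \<open>a \<notin> dom p\<close> unfolding p'_def DR_def by (auto simp: domIff)
  moreover have "a + 1/2 \<notin> DR p'" using above DR' by force
  ultimately obtain q where q: "p' \<subseteq>\<^sub>m q" "straddles (a + 1/2) q"
    using straddling_extension by blast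
  have "DR q \<noteq> {}" using DR_map_le[OF q(1)] DR' by blast
  then have "q \<in> Pplus_gd" using q(2) straddles_in_Pgd_1 by blast
  moreover have "p \<subseteq>\<^sub>m q" using map_le_upd_new[OF \<open>a \<notin> dom p\<close>] q(1) map_le_trans
    unfolding p'_def by blast
  ultimately show ?thesis by blast
qed

section \<open>Automorphisms of the rationals\<close>

lemma aut_inv_f_f: "is_aut b \<Longrightarrow> inv b (b x) = x"
  unfolding is_aut_def by (simp add: bij_is_inj)

lemma aut_f_inv_f: "is_aut b \<Longrightarrow> b (inv b y) = y"
  unfolding is_aut_def by (simp add: bij_is_surj surj_f_inv_f)

lemma aut_less_iff: "is_aut b \<Longrightarrow> b x < b y \<longleftrightarrow> x < y"
  unfolding is_aut_def by (simp add: strict_mono_less)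

lemma is_aut_comp: "is_aut f \<Longrightarrow> is_aut g \<Longrightarrow> is_aut (g \<circ> f)"
  unfolding is_aut_def strict_mono_def by (auto intro: bij_comp)

lemma is_aut_inv:
  assumes "is_aut b" shows "is_aut (inv b)"
proof -
  have "strict_mono (inv b)"
    by (rule strict_monoI) (metis aut_less_iff[OF assms] aut_f_inv_f[OF assms])
  then show ?thesis using assms unfolding is_aut_def by (simp add: bij_imp_bij_inv)
qed

lemma dom_aut_apply: "is_aut \<alpha> \<Longrightarrow> dom (aut_apply \<alpha> p) = \<alpha> ` dom p"
  unfolding aut_apply_def dom_def
  by (auto simp: aut_inv_f_f aut_f_inv_f intro!: image_eqI[where x = "inv \<alpha> _"])

lemma aut_apply_apply: "is_aut \<alpha> \<Longrightarrow> aut_apply \<alpha> p (\<alpha> x) = map_option \<alpha> (p x)"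
  unfolding aut_apply_def by (simp add: aut_inv_f_f)

definition pl_move :: "'a::linordered_field \<Rightarrow> 'a \<Rightarrow> 'a \<Rightarrow> 'a \<Rightarrow> 'a \<Rightarrow> 'a" where
  "pl_move l u v r x =
     (if x \<le> l \<or> r \<le> x then x
      else if x \<le> u then l + (x - l) * ((v - l) / (u - l))
      else v + (x - u) * ((r - v) / (r - u)))"

lemma pl_move_le:
  assumes "l < u" "u < r" "l < v" "v < r" "x \<le> u"
  shows "pl_move l u v r x \<le> v"
proof (cases "x \<le> l")
  case False
  have "(x - l) * ((v - l) / (u - l)) \<le> (u - l) * ((v - l) / (u - l))"
    using assms by (intro mult_right_mono) auto
  then show ?thesis using False assms unfolding pl_move_def by auto
qed (use assms in \<open>auto simp: pl_move_def\<close>)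

lemma pl_move_gt:
  assumes "l < u" "u < r" "l < v" "v < r" "u < x"
  shows "v < pl_move l u v r x"
proof (cases "r \<le> x")
  case False
  have "0 < (x - u) * ((r - v) / (r - u))" using assms by (intro mult_pos_pos) auto
  then show ?thesis using False assms unfolding pl_move_def by auto
qed (use assms in \<open>auto simp: pl_move_def\<close>)

lemma pl_move_strict_mono:
  assumes lu: "l < u" "u < r" and lv: "l < v" "v < r"
  shows "strict_mono (pl_move l u v r)"
proof (rule strict_monoI)
  fix x y :: 'a assume xy: "x < y"
  let ?f = "pl_move l u v r"
  have k1: "0 < (v - l) / (u - l)" and k2: "0 < (r - v) / (r - u)" using assms by auto
  consider "y \<le> u" | "u < x" | "x \<le> u" "u < y" by linarith
  then show "?f x < ?f y"
  proof cases
    case 1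
    have "l + (x - l) * ((v - l) / (u - l)) < l + (y - l) * ((v - l) / (u - l))"
      using k1 xy by (intro add_strict_left_mono mult_strict_right_mono) auto
    moreover have "l < l + (y - l) * ((v - l) / (u - l))" if "l < y"
      using k1 that by (simp del: times_divide_eq_right)
    ultimately show ?thesis using 1 xy lu unfolding pl_move_def by auto
  next
    case 2
    have "v + (x - u) * ((r - v) / (r - u)) < v + (y - u) * ((r - v) / (r - u))"
      using k2 xy by (intro add_strict_left_mono mult_strict_right_mono) auto
    moreover have "v + (x - u) * ((r - v) / (r - u)) < r" if "x < r"
    proof -
      have "(x - u) * ((r - v) / (r - u)) < (r - u) * ((r - v) / (r - u))"
        using k2 that by (intro mult_strict_right_mono) auto
      then show ?thesis using lu by simp
    qed
    ultimately show ?thesis using 2 xy lu unfolding pl_move_def by auto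
  next
    case 3
    then show ?thesis using pl_move_le[OF assms] pl_move_gt[OF assms] by (meson le_less_trans)
  qed
qed

lemma pl_move_inverse:
  assumes "l < u" "u < r" "l < v" "v < r"
  shows "pl_move l v u r (pl_move l u v r x) = x"
proof -
  let ?f = "pl_move l u v r"
  consider "x \<le> l \<or> r \<le> x" | "l < x" "x \<le> u" | "u < x" "x < r" by linarith
  then show ?thesis
  proof cases
    case 1
    then show ?thesis using assms unfolding pl_move_def by auto
  next
    case 2
    then have e: "?f x = l + (x - l) * ((v - l) / (u - l))" using assms unfolding pl_move_def by auto
    have "?f l < ?f x" "?f x \<le> ?f u"
      using 2 pl_move_strict_mono[OF assms] by (auto simp: strict_mono_less strict_mono_less_eq)
    then have "l < ?f x" "?f x \<le> v" using assms unfolding pl_move_def by auto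
    then have "pl_move l v u r (?f x) = l + (?f x - l) * ((u - l) / (v - l))"
      using assms unfolding pl_move_def[of l v u r] by auto
    also have "\<dots> = x" using e assms by (simp add: field_simps)
    finally show ?thesis .
  next
    case 3
    then have e: "?f x = v + (x - u) * ((r - v) / (r - u))" using assms unfolding pl_move_def by auto
    have "?f u < ?f x" "?f x < ?f r"
      using 3 pl_move_strict_mono[OF assms] by (auto simp: strict_mono_less)
    then have "v < ?f x" "?f x < r" using assms unfolding pl_move_def by auto
    then have "pl_move l v u r (?f x) = u + (?f x - v) * ((r - u) / (r - v))"
      using assms unfolding pl_move_def[of l v u r] by auto
    also have "\<dots> = x" using e assms by (simp add: field_simps)
    finally show ?thesis .
  qed
qed

lemma aut_move:
  assumes "l < u" "u < r" "l < v" "v < r"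
  shows "\<exists>g. is_aut g \<and> g u = v \<and> (\<forall>x. x \<le> l \<or> r \<le> x \<longrightarrow> g x = x)"
proof (intro exI conjI)
  have "surj (pl_move l u v r)"
    using pl_move_inverse[of l v r u] assms by (intro surjI[where f = "pl_move l v u r"]) auto
  then show "is_aut (pl_move l u v r)"
    using pl_move_strict_mono[OF assms] unfolding is_aut_def bij_def
    by (simp add: strict_mono_imp_inj_on)
qed (use assms in \<open>auto simp: pl_move_def\<close>)

lemma aut_correct_at_point:
  assumes h: "fin_piso h" and b: "is_aut b" and v: "h a = Some v"
    and hb: "\<And>x. x \<in> dom h \<Longrightarrow> x \<noteq> a \<Longrightarrow> h x = Some (b x)"
  shows "\<exists>g. is_aut g \<and> (\<forall>x\<in>dom h. h x = Some (g x))"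
proof -
  let ?L = "b ` {x\<in>dom h. x < a}" and ?R = "b ` {x\<in>dom h. a < x}"
  have fin: "finite ?L" "finite ?R" "finite {}" "finite {b a, v}"
    using h unfolding fin_piso_def by auto
  have "b x < v" if "x \<in> dom h" "x < a" for x
    using fin_piso_less[OF h hb[OF that(1)] v that(2)] that by simp
  then have L: "\<forall>y\<in>?L. \<forall>z\<in>{b a, v}. y < z" using aut_less_iff[OF b] by auto
  obtain l where l: "\<forall>y\<in>?L. y < l" "l < b a" "l < v"
    using exists_between_avoiding[OF fin(1,4,3) L] by auto
  have "v < b x" if "x \<in> dom h" "a < x" for x
    using fin_piso_less[OF h v hb[OF that(1)] that(2)] that by simp
  then have R: "\<forall>y\<in>{b a, v}. \<forall>z\<in>?R. y < z" using aut_less_iff[OF b] by auto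
  obtain r where r: "b a < r" "v < r" "\<forall>y\<in>?R. r < y"
    using exists_between_avoiding[OF fin(4,2,3) R] by auto
  obtain g where g: "is_aut g" "g (b a) = v" "\<forall>x. x \<le> l \<or> r \<le> x \<longrightarrow> g x = x"
    using aut_move[OF l(2) r(1) l(3) r(2)] by blast
  have fixed: "g (b x) = b x" if "x \<in> dom h" "x \<noteq> a" for x
  proof (cases "x < a")
    case True
    then show ?thesis using g(3) l(1) that by force
  next
    case False
    then have "a < x" using that(2) by simp
    then show ?thesis using g(3) r(3) that by force
  qed
  have "h x = Some ((g \<circ> b) x)" if "x \<in> dom h" for x
    using g(2) v hb[OF that] fixed[OF that] by (cases "x = a") auto
  then show ?thesis using is_aut_comp[OF b g(1)] by blast
qed

lemma fin_piso_extends_to_aut: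
  assumes "fin_piso h"
  shows "\<exists>b. is_aut b \<and> (\<forall>x\<in>dom h. h x = Some (b x))"
proof -
  have "finite (dom h)" using assms unfolding fin_piso_def by simp
  then show ?thesis using assms
  proof (induction "dom h" arbitrary: h rule: finite_induct)
    case empty
    have "is_aut id" unfolding is_aut_def by (simp add: strict_mono_def)
    then show ?case using empty.hyps by auto
  next
    case (insert a D)
    have "dom (h(a := None)) = D" using insert.hyps(2,4) by auto
    moreover have "fin_piso (h(a := None))" using insert.prems unfolding fin_piso_def by auto
    ultimately obtain b where "is_aut b" "\<forall>x\<in>D. (h(a := None)) x = Some (b x)"
      using insert.hyps(3) by blast
    moreover obtain v where "h a = Some v" using insert.hyps(4) by auto
    ultimately show ?case using insert.prems insert.hyps(4)
      by (intro aut_correct_at_point[of h b a v]) (auto split: if_splits)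
  qed
qed

section \<open>Chain coordinates\<close>

definition squash :: "'a::linordered_field \<Rightarrow> 'a \<Rightarrow> 'a" where
  "squash c t = (t - c) / (t - c + 1)"

lemma squash_bounds: "c < t \<Longrightarrow> 0 < squash c t \<and> squash c t < 1"
  unfolding squash_def by (auto simp: divide_less_eq)

lemma squash_less: "c < s \<Longrightarrow> s < t \<Longrightarrow> squash c s < squash c t"
  unfolding squash_def by (simp add: frac_less2 divide_less_eq field_simps)

text \<open>The offset \<open>card (DR p) + 1\<close> makes a recursive step from below \<open>c\<close> to above \<open>c\<close> decrease
  the measure.\<close>

definition coord_measure :: "rat \<Rightarrow> pmap \<Rightarrow> rat \<Rightarrow> nat" where
  "coord_measure c p x = (if c < x then card {y\<in>DR p. c < y \<and> y < x}
      else card (DR p) + 1 + card {y\<in>DR p. x < y \<and> y \<le> c})"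

lemma coord_measure_pinv_less:
  assumes "c < x" "finite (dom p)" "p (pinv p x) = Some x" "c < pinv p x" "pinv p x < x"
  shows "coord_measure c p (pinv p x) < coord_measure c p x"
proof -
  have "finite (DR p)" "pinv p x \<in> DR p" using assms(2,3) unfolding DR_def by (auto simp: finite_ran)
  then have "card {y\<in>DR p. c < y \<and> y < pinv p x} < card {y\<in>DR p. c < y \<and> y < x}"
  proof (intro psubset_card_mono)
    have "pinv p x \<in> {y\<in>DR p. c < y \<and> y < x}" using \<open>pinv p x \<in> DR p\<close> assms(4,5) by simp
    then show "{y\<in>DR p. c < y \<and> y < pinv p x} \<subset> {y\<in>DR p. c < y \<and> y < x}"
      using assms(5) by auto
  qed simp
  then show ?thesis using assms(1,4) unfolding coord_measure_def by simp
qed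

lemma coord_measure_image_less:
  assumes "\<not> c < x" "finite (dom p)" "x \<in> dom p" "x < the (p x)"
  shows "coord_measure c p (the (p x)) < coord_measure c p x"
proof -
  have fin: "finite (DR p)" using assms(2) unfolding DR_def by (simp add: finite_ran)
  have px: "the (p x) \<in> DR p" using assms(3) unfolding DR_def ran_def by auto
  have x: "coord_measure c p x = card (DR p) + 1 + card {y\<in>DR p. x < y \<and> y \<le> c}"
    unfolding coord_measure_def using assms(1) by (rule if_not_P)
  show ?thesis
  proof (cases "c < the (p x)")
    case True
    have "coord_measure c p (the (p x)) = card {y\<in>DR p. c < y \<and> y < the (p x)}"
      unfolding coord_measure_def using True by (rule if_P)
    moreover have "card {y\<in>DR p. c < y \<and> y < the (p x)} \<le> card (DR p)"
      using fin by (intro card_mono) auto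
    ultimately show ?thesis using x by linarith
  next
    case False
    have "coord_measure c p (the (p x)) = card (DR p) + 1 + card {y\<in>DR p. the (p x) < y \<and> y \<le> c}"
      unfolding coord_measure_def using False by (rule if_not_P)
    moreover have "card {y\<in>DR p. the (p x) < y \<and> y \<le> c} < card {y\<in>DR p. x < y \<and> y \<le> c}"
    proof (rule psubset_card_mono)
      have "the (p x) \<in> {y\<in>DR p. x < y \<and> y \<le> c}" using px False assms(4) by simp
      then show "{y\<in>DR p. the (p x) < y \<and> y \<le> c} \<subset> {y\<in>DR p. x < y \<and> y \<le> c}"
        using assms(4) by auto
    qed (use fin in simp)
    ultimately show ?thesis using x by linarith
  qed
qed

text \<open>If a chain of \<open>p\<close> passes from \<open>y' < c\<close> to \<open>y > c\<close>, then \<open>y\<close> gets the coordinate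
  \<open>squash c y \<in> (0, 1)\<close> and every step along the chain adds \<open>1\<close>. The guards only serve
  termination; on straddling maps they hold whenever the recursion is meant to apply.\<close>

function coord :: "rat \<Rightarrow> pmap \<Rightarrow> rat \<Rightarrow> rat" where
  "coord c p x =
     (if c < x then
        (if finite (dom p) \<and> p (pinv p x) = Some x \<and> c < pinv p x \<and> pinv p x < x
         then coord c p (pinv p x) + 1 else squash c x)
      else if finite (dom p) \<and> x \<in> dom p \<and> x < the (p x) then coord c p (the (p x)) - 1
      else 0)"
  by auto
termination
  by (relation "measure (\<lambda>(c, p, x). coord_measure c p x)")
    (auto intro: coord_measure_pinv_less coord_measure_image_less)

declare coord.simps [simp del]

lemma straddles_above:
  assumes "straddles c p" "y \<in> DR p" "c < y"
  shows "p (pinv p y) = Some y" "pinv p y < y" "pinv p y \<in> DR p" "pinv p y \<noteq> c"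
proof -
  have p: "fin_piso p" "shifts_up p" "c \<notin> DR p" using assms(1) unfolding straddles_def by auto
  have "y \<notin> chain_starts p" using assms unfolding straddles_def by force
  then have "y \<in> ran p" using assms(2) unfolding chain_starts_def by blast
  then show "p (pinv p y) = Some y" "pinv p y < y"
    using fin_piso_pinv[OF p(1)] shifts_up_pinv_less[OF p(1,2)] by auto
  then show "pinv p y \<in> DR p" "pinv p y \<noteq> c" using p(3) unfolding DR_def by auto
qed

lemma straddles_below:
  assumes "straddles c p" "x \<in> DR p" "x < c"
  shows "x \<in> dom p" "x < the (p x)" "the (p x) \<in> DR p" "the (p x) \<noteq> c"
proof -
  have p: "shifts_up p" "c \<notin> DR p" using assms(1) unfolding straddles_def by auto
  have "x \<notin> chain_ends p" using assms unfolding straddles_def by force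
  then show "x \<in> dom p" using assms(2) unfolding chain_ends_def by blast
  then show "x < the (p x)" "the (p x) \<in> DR p" "the (p x) \<noteq> c"
    using p unfolding shifts_up_def DR_def ran_def by auto
qed

lemma straddles_finite_dom: "straddles c p \<Longrightarrow> finite (dom p)"
  unfolding straddles_def fin_piso_def by blast

lemma coord_guard_above:
  assumes "straddles c p" "y \<in> DR p" "c < y" "c < pinv p y"
  shows "finite (dom p) \<and> p (pinv p y) = Some y \<and> c < pinv p y \<and> pinv p y < y"
  using straddles_above[OF assms(1-3)] straddles_finite_dom[OF assms(1)] assms(4) by blast

lemma coord_guard_below:
  assumes "straddles c p" "x \<in> DR p" "x < c"
  shows "\<not> c < x \<and> finite (dom p) \<and> x \<in> dom p \<and> x < the (p x)"
  using straddles_below[OF assms] straddles_finite_dom[OF assms(1)] assms(3) by simp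

lemma coord_cross:
  assumes "straddles c p" "y \<in> DR p" "c < y" "pinv p y < c"
  shows "coord c p y = squash c y"
  using assms(3,4) by (subst coord.simps) auto

lemma coord_step_above:
  assumes "straddles c p" "y \<in> DR p" "c < y" "c < pinv p y"
  shows "coord c p y = coord c p (pinv p y) + 1"
  using coord_guard_above[OF assms] assms(3) by (subst coord.simps) auto

lemma coord_step_below:
  assumes "straddles c p" "x \<in> DR p" "x < c"
  shows "coord c p x = coord c p (the (p x)) - 1"
  using coord_guard_below[OF assms] by (subst coord.simps) auto

lemma coord_step:
  assumes "straddles c p" "p x = Some y"
  shows "coord c p y = coord c p x + 1"
proof -
  have p: "fin_piso p" "c \<notin> DR p" using assms(1) unfolding straddles_def by auto
  have "x \<in> DR p" "y \<in> DR p" using assms(2) unfolding DR_def ran_def by auto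
  then consider "x < c" | "c < x" using p(2) by (cases x c rule: linorder_cases) auto
  then show ?thesis
  proof cases
    case 1
    then show ?thesis using coord_step_below[OF assms(1) \<open>x \<in> DR p\<close> 1] assms(2) by simp
  next
    case 2
    have "pinv p y = x" using pinv_eqI[OF p(1) assms(2)] .
    moreover have "x < y"
      using assms straddles_def shifts_up_pinv_less[OF p(1)] calculation by (metis ranI)
    ultimately show ?thesis using coord_step_above[OF assms(1) \<open>y \<in> DR p\<close>] 2 by simp
  qed
qed

lemma coord_pos:
  "straddles c p \<Longrightarrow> y \<in> DR p \<Longrightarrow> c < y \<Longrightarrow> 0 < coord c p y"
proof (induction c p y rule: coord.induct)
  case (1 c p y)
  note above = straddles_above[OF "1.prems"]
  show ?case
  proof (cases "pinv p y < c")
    case True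
    then show ?thesis using coord_cross[OF "1.prems" True] squash_bounds[OF "1.prems"(3)] by simp
  next
    case False
    then have "c < pinv p y" using above(4) by simp
    then have "0 < coord c p (pinv p y)"
      using "1.IH"(1) coord_guard_above[OF "1.prems" \<open>c < pinv p y\<close>] "1.prems" above by blast
    then show ?thesis using coord_step_above[OF "1.prems" \<open>c < pinv p y\<close>] by simp
  qed
qed

lemma coord_less_1_iff:
  assumes "straddles c p" "y \<in> DR p" "c < y"
  shows "coord c p y < 1 \<longleftrightarrow> pinv p y < c"
proof (cases "pinv p y < c")
  case True
  then show ?thesis using coord_cross[OF assms True] squash_bounds[OF assms(3)] by simp
next
  case False
  then have "c < pinv p y" using straddles_above(4)[OF assms] by simp
  then show ?thesis
    using False coord_step_above[OF assms] coord_pos[OF assms(1) straddles_above(3)[OF assms]]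
    by simp
qed

lemma coord_neg:
  "straddles c p \<Longrightarrow> x \<in> DR p \<Longrightarrow> x < c \<Longrightarrow> coord c p x < 0"
proof (induction c p x rule: coord.induct)
  case (1 c p x)
  note below = straddles_below[OF "1.prems"]
  have "pinv p (the (p x)) = x"
    using below(1) pinv_eqI "1.prems"(1) unfolding straddles_def by auto
  then have "coord c p (the (p x)) < 1"
    using coord_less_1_iff[OF "1.prems"(1) below(3)] "1.IH"(2) coord_guard_below[OF "1.prems"]
      "1.prems" below by (cases "c < the (p x)") force+
  then show ?case using coord_step_below[OF "1.prems"] by simp
qed

lemma coord_mono_above:
  "straddles c p \<Longrightarrow> y \<in> DR p \<Longrightarrow> x \<in> DR p \<Longrightarrow> c < x \<Longrightarrow> x < y \<Longrightarrow>
    coord c p x < coord c p y"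
proof (induction c p y arbitrary: x rule: coord.induct)
  case (1 c p y)
  have cy: "c < y" using "1.prems"(4,5) by simp
  note x = straddles_above[OF "1.prems"(1,3,4)] and y = straddles_above[OF "1.prems"(1,2) cy]
  have "fin_piso p" using "1.prems"(1) unfolding straddles_def by blast
  then have pinv_less: "pinv p x < pinv p y" using fin_piso_less_iff x(1) y(1) "1.prems"(5) by blast
  show ?case
  proof (cases "pinv p y < c")
    case True
    then show ?thesis
      using coord_cross[OF "1.prems"(1,3,4)] coord_cross[OF "1.prems"(1,2) cy] pinv_less
        squash_less[OF "1.prems"(4,5)] by simp
  next
    case False
    then have cpy: "c < pinv p y" using y(4) by simp
    show ?thesis
    proof (cases "pinv p x < c")
      case True
      then show ?thesis using coord_less_1_iff[OF "1.prems"(1,3,4)]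
          coord_less_1_iff[OF "1.prems"(1,2) cy] cpy by simp
    next
      case False
      then have "c < pinv p x" using x(4) by simp
      then have "coord c p (pinv p x) < coord c p (pinv p y)"
        using "1.IH"(1) cy coord_guard_above[OF "1.prems"(1,2) cy cpy] "1.prems"(1) y(3) x(3)
          pinv_less by blast
      then show ?thesis using coord_step_above[OF "1.prems"(1,3,4) \<open>c < pinv p x\<close>]
          coord_step_above[OF "1.prems"(1,2) cy cpy] by simp
    qed
  qed
qed

lemma coord_mono_below:
  "straddles c p \<Longrightarrow> x \<in> DR p \<Longrightarrow> y \<in> DR p \<Longrightarrow> y < c \<Longrightarrow> x < y \<Longrightarrow>
    coord c p x < coord c p y"
proof (induction c p x arbitrary: y rule: coord.induct)
  case (1 c p x)
  have xc: "x < c" using "1.prems"(4,5) by simp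
  note x = straddles_below[OF "1.prems"(1,2) xc] and y = straddles_below[OF "1.prems"(1,3,4)]
  have "fin_piso p" using "1.prems"(1) unfolding straddles_def by blast
  moreover have "p x = Some (the (p x))" "p y = Some (the (p y))" using x(1) y(1) by auto
  ultimately have image_less: "the (p x) < the (p y)"
    using fin_piso_less "1.prems"(5) by blast
  have "coord c p (the (p x)) < coord c p (the (p y))"
  proof (cases "c < the (p x)")
    case True
    then show ?thesis using coord_mono_above "1.prems"(1) x(3) y(3) image_less by blast
  next
    case False
    then have "the (p x) < c" using x(4) by simp
    show ?thesis
    proof (cases "c < the (p y)")
      case True
      then show ?thesis
        using coord_neg[OF "1.prems"(1) x(3) \<open>the (p x) < c\<close>] coord_pos[OF "1.prems"(1) y(3)] by simp
    next
      case False
      then have "the (p y) < c" using y(4) by simp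
      then show ?thesis
        using "1.IH"(2) coord_guard_below[OF "1.prems"(1,2) xc] "1.prems"(1) x(3) y(3) image_less
        by blast
    qed
  qed
  then show ?case
    using coord_step_below[OF "1.prems"(1,2) xc] coord_step_below[OF "1.prems"(1,3,4)] by simp
qed

lemma coord_strict_mono_on:
  assumes "straddles c p"
  shows "strict_mono_on (DR p) (coord c p)"
proof (rule strict_mono_onI)
  fix x y assume xy: "x \<in> DR p" "y \<in> DR p" "x < y"
  have "x \<noteq> c" "y \<noteq> c" using assms xy unfolding straddles_def by auto
  then consider "c < x" | "x < c" "c < y" | "y < c" using xy(3) by linarith
  then show "coord c p x < coord c p y"
  proof cases
    case 1
    then show ?thesis using coord_mono_above assms xy by blast
  next
    case 2
    then show ?thesis using coord_neg[OF assms xy(1)] coord_pos[OF assms xy(2)] by simp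
  next
    case 3
    then show ?thesis using coord_mono_below assms xy by blast
  qed
qed

lemma coord_map_le:
  "straddles c p \<Longrightarrow> straddles c q \<Longrightarrow> p \<subseteq>\<^sub>m q \<Longrightarrow> x \<in> DR p \<Longrightarrow>
    coord c q x = coord c p x"
proof (induction c p x rule: coord.induct)
  case (1 c p x)
  have xq: "x \<in> DR q" using DR_map_le[OF "1.prems"(3)] "1.prems"(4) by blast
  have "x \<noteq> c" using "1.prems"(1,4) unfolding straddles_def by auto
  then consider "c < x" | "x < c" by linarith
  then show ?case
  proof cases
    case 1
    note above = straddles_above[OF "1.prems"(1,4) 1]
    have "q (pinv p x) = Some x" using map_le_SomeD[OF "1.prems"(3) above(1)] .
    then have same: "pinv q x = pinv p x"
      using pinv_eqI "1.prems"(2) unfolding straddles_def by blast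
    show ?thesis
    proof (cases "pinv p x < c")
      case True
      then show ?thesis
        using coord_cross[OF "1.prems"(1,4) 1] coord_cross[OF "1.prems"(2) xq 1] same by simp
    next
      case False
      then have "c < pinv p x" using above(4) by simp
      then have "coord c q (pinv p x) = coord c p (pinv p x)"
        using "1.IH"(1) 1 coord_guard_above[OF "1.prems"(1,4) 1] "1.prems"(1-3) above(3) by blast
      then show ?thesis using coord_step_above[OF "1.prems"(1,4) 1 \<open>c < pinv p x\<close>]
          coord_step_above[OF "1.prems"(2) xq 1] same \<open>c < pinv p x\<close> by simp
    qed
  next
    case 2
    note below = straddles_below[OF "1.prems"(1,4) 2]
    have same: "q x = p x" using "1.prems"(3) below(1) unfolding map_le_def by simp
    have "coord c q (the (p x)) = coord c p (the (p x))"
      using "1.IH"(2) coord_guard_below[OF "1.prems"(1,4) 2] "1.prems"(1-3) below(3) by blast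
    then show ?thesis
      using coord_step_below[OF "1.prems"(1,4) 2] coord_step_below[OF "1.prems"(2) xq 2] same
      by simp
  qed
qed

section \<open>Amalgamation\<close>

lemma straddles_coord_aut:
  assumes "straddles c p"
  obtains b where "is_aut b" "\<And>x y. p x = Some y \<Longrightarrow> b y = b x + 1"
    "\<And>x. x \<in> DR p \<Longrightarrow> b x = coord c p x"
proof -
  have "fin_piso ((Some \<circ> coord c p) |` DR p)"
    using assms finite_DR coord_strict_mono_on unfolding straddles_def
    by (blast intro: fin_piso_restrict_graph)
  then obtain b where "is_aut b"
    and ext: "\<forall>x\<in>dom ((Some \<circ> coord c p) |` DR p). ((Some \<circ> coord c p) |` DR p) x = Some (b x)"
    using fin_piso_extends_to_aut by blast
  moreover have "b x = coord c p x" if "x \<in> DR p" for x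
    using ext[rule_format, of x] that by (simp add: dom_def)
  ultimately have b: "is_aut b" "\<forall>x\<in>DR p. b x = coord c p x" by blast+
  moreover have "b y = b x + 1" if "p x = Some y" for x y
  proof -
    have "x \<in> DR p" "y \<in> DR p" using that unfolding DR_def ran_def by auto
    then show ?thesis using b(2) coord_step[OF assms that] by simp
  qed
  ultimately show ?thesis using that by blast
qed

definition shift_conj :: "(rat \<Rightarrow> rat) \<Rightarrow> rat \<Rightarrow> rat" where
  "shift_conj b x = inv b (b x + 1)"

lemma shift_conj_strict_mono: "is_aut b \<Longrightarrow> strict_mono (shift_conj b)"
  unfolding shift_conj_def using is_aut_inv aut_less_iff by (simp add: strict_mono_def)

lemma less_shift_conj: "is_aut b \<Longrightarrow> x < shift_conj b x"
  unfolding shift_conj_def by (metis aut_inv_f_f aut_less_iff is_aut_inv less_add_one)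

lemma shift_conj_eqI: "is_aut b \<Longrightarrow> b y = b x + 1 \<Longrightarrow> shift_conj b x = y"
  unfolding shift_conj_def by (metis aut_inv_f_f)

lemma common_extension_in_Pplus:
  assumes "strict_mono g" "\<And>x. x < g x" "finite (dom p)" "finite (dom q)"
    and "\<forall>x\<in>dom p. p x = Some (g x)" "\<forall>x\<in>dom q. q x = Some (g x)"
  shows "\<exists>r\<in>Pplus. p \<subseteq>\<^sub>m r \<and> q \<subseteq>\<^sub>m r"
proof -
  let ?r = "(Some \<circ> g) |` (dom p \<union> dom q)"
  have "fin_piso ?r"
    using assms(1,3,4) by (intro fin_piso_restrict_graph) (auto intro: monotone_on_subset)
  moreover have "shifts_up ?r" using assms(2) unfolding shifts_up_def by simp
  moreover have "p \<subseteq>\<^sub>m ?r" "q \<subseteq>\<^sub>m ?r"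
    using assms(5,6) by (auto intro: map_le_restrict_graph)
  ultimately show ?thesis using Psgn_1_iff by blast
qed

lemma straddling_conjugacy:
  assumes p0: "straddles c p0" and q: "straddles c q1" "straddles c q2"
    and le: "p0 \<subseteq>\<^sub>m q1" "p0 \<subseteq>\<^sub>m q2"
  obtains \<alpha> b where "is_aut \<alpha>" "is_aut b" "\<forall>x\<in>DR p0. \<alpha> x = x"
    "\<And>x y. q1 x = Some y \<Longrightarrow> y = shift_conj b x"
    "\<And>x y. q2 x = Some y \<Longrightarrow> \<alpha> y = shift_conj b (\<alpha> x)"
proof -
  obtain b1 where b1: "is_aut b1" "\<And>x y. q1 x = Some y \<Longrightarrow> b1 y = b1 x + 1"
    "\<And>x. x \<in> DR q1 \<Longrightarrow> b1 x = coord c q1 x"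
    using straddles_coord_aut[OF q(1)] by blast
  obtain b2 where b2: "is_aut b2" "\<And>x y. q2 x = Some y \<Longrightarrow> b2 y = b2 x + 1"
    "\<And>x. x \<in> DR q2 \<Longrightarrow> b2 x = coord c q2 x"
    using straddles_coord_aut[OF q(2)] by blast
  define \<alpha> where "\<alpha> = inv b1 \<circ> b2"
  have \<alpha>: "is_aut \<alpha>" unfolding \<alpha>_def using is_aut_comp[OF b2(1) is_aut_inv[OF b1(1)]] .
  have fixes_p0: "\<forall>x\<in>DR p0. \<alpha> x = x"
  proof
    fix x assume "x \<in> DR p0"
    then have "x \<in> DR q1" "x \<in> DR q2" using DR_map_le le by blast+
    then have "b2 x = b1 x"
      using b1(3) b2(3) coord_map_le[OF p0 q(1) le(1) \<open>x \<in> DR p0\<close>]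
        coord_map_le[OF p0 q(2) le(2) \<open>x \<in> DR p0\<close>] by simp
    then show "\<alpha> x = x" unfolding \<alpha>_def by (simp add: aut_inv_f_f[OF b1(1)])
  qed
  have q1_shift: "y = shift_conj b1 x" if "q1 x = Some y" for x y
    using shift_conj_eqI[OF b1(1) b1(2)[OF that]] by simp
  have q2_shift: "\<alpha> y = shift_conj b1 (\<alpha> x)" if "q2 x = Some y" for x y
  proof -
    have "b1 (\<alpha> y) = b1 (\<alpha> x) + 1"
      using b2(2)[OF that] unfolding \<alpha>_def by (simp add: aut_f_inv_f[OF b1(1)])
    then show ?thesis using shift_conj_eqI[OF b1(1)] by simp
  qed
  show ?thesis by (rule that[OF \<alpha> b1(1) fixes_p0 q1_shift q2_shift])
qed

lemma Pplus_gd_amalgamation: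
  assumes "p0 \<in> Pplus_gd" "p1 \<in> Pplus_gd" "p2 \<in> Pplus_gd" "p0 \<subseteq>\<^sub>m p1" "p0 \<subseteq>\<^sub>m p2"
  shows "\<exists>p3\<in>Pplus_gd. \<exists>\<alpha>. is_aut \<alpha> \<and> (\<forall>x\<in>DR p0. \<alpha> x = x) \<and>
           p1 \<subseteq>\<^sub>m p3 \<and> aut_apply \<alpha> p2 \<subseteq>\<^sub>m p3"
proof -
  have p0: "fin_piso p0" "shifts_up p0" "\<forall>e\<in>chain_ends p0. \<forall>s\<in>chain_starts p0. s < e"
    and p1: "fin_piso p1" "shifts_up p1" and p2: "fin_piso p2" "shifts_up p2"
    using assms(1-3) Pgd_1_iff by auto
  have fin: "finite (chain_starts p0)" "finite (chain_ends p0)" "finite (DR p1 \<union> DR p2)"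
    using finite_DR p0(1) p1(1) p2(1) unfolding chain_starts_def chain_ends_def by auto
  have "\<forall>s\<in>chain_starts p0. \<forall>e\<in>chain_ends p0. s < e" using p0(3) by blast
  then obtain c where c: "c \<notin> DR p1 \<union> DR p2"
    "\<forall>s\<in>chain_starts p0. s < c" "\<forall>e\<in>chain_ends p0. c < e"
    using exists_between_avoiding[OF fin] by blast
  then have "straddles c p0" using p0 DR_map_le[OF assms(4)] unfolding straddles_def by blast
  obtain q1 where q1: "p1 \<subseteq>\<^sub>m q1" "straddles c q1" using straddling_extension p1 c(1) by blast
  obtain q2 where q2: "p2 \<subseteq>\<^sub>m q2" "straddles c q2" using straddling_extension p2 c(1) by blast
  have le: "p0 \<subseteq>\<^sub>m q1" "p0 \<subseteq>\<^sub>m q2" using assms(4,5) q1(1) q2(1) map_le_trans by blast+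
  obtain \<alpha> b where \<alpha>: "is_aut \<alpha>" and b: "is_aut b" and fixes_p0: "\<forall>x\<in>DR p0. \<alpha> x = x"
    and q1_shift: "\<And>x y. q1 x = Some y \<Longrightarrow> y = shift_conj b x"
    and q2_shift: "\<And>x y. q2 x = Some y \<Longrightarrow> \<alpha> y = shift_conj b (\<alpha> x)"
    using straddling_conjugacy[OF \<open>straddles c p0\<close> q1(2) q2(2) le] by blast
  have "\<forall>x\<in>dom p1. p1 x = Some (shift_conj b x)"
    using map_le_SomeD[OF q1(1)] q1_shift by fastforce
  moreover have "\<forall>z\<in>dom (aut_apply \<alpha> p2). aut_apply \<alpha> p2 z = Some (shift_conj b z)"
    using map_le_SomeD[OF q2(1)] q2_shift
    by (auto simp: dom_aut_apply[OF \<alpha>] aut_apply_apply[OF \<alpha>])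
  moreover have "finite (dom p1)" "finite (dom (aut_apply \<alpha> p2))"
    using p1(1) p2(1) unfolding dom_aut_apply[OF \<alpha>] fin_piso_def by auto
  ultimately obtain r where "r \<in> Pplus" "p1 \<subseteq>\<^sub>m r" "aut_apply \<alpha> p2 \<subseteq>\<^sub>m r"
    using common_extension_in_Pplus shift_conj_strict_mono[OF b] less_shift_conj[OF b] by meson
  then obtain p3 where "p3 \<in> Pplus_gd" "p1 \<subseteq>\<^sub>m p3" "aut_apply \<alpha> p2 \<subseteq>\<^sub>m p3"
    using Pplus_gd_cofinal map_le_trans by meson
  then show ?thesis using \<alpha> fixes_p0 by blast
qed

section \<open>Reflection in zero\<close>

lemma in_uminus_image: "(x::'a::group_add) \<in> uminus ` A \<longleftrightarrow> - x \<in> A"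
  by (force intro: image_eqI[where x = "- x"])

definition reflect :: "pmap \<Rightarrow> pmap" where
  "reflect p = (\<lambda>x. map_option uminus (p (- x)))"

lemma reflect_reflect [simp]: "reflect (reflect p) = p"
  unfolding reflect_def by (simp add: option.map_comp comp_def option.map_ident)

lemma dom_reflect: "x \<in> dom (reflect p) \<longleftrightarrow> - x \<in> dom p"
  unfolding reflect_def by auto

lemma ran_reflect: "x \<in> ran (reflect p) \<longleftrightarrow> - x \<in> ran p"
  unfolding reflect_def ran_def by (auto simp: minus_equation_iff) (metis minus_minus)

lemma DR_reflect: "x \<in> DR (reflect p) \<longleftrightarrow> - x \<in> DR p"
  unfolding DR_def using dom_reflect ran_reflect by blast

lemma the_reflect: "- x \<in> dom p \<Longrightarrow> the (reflect p x) = - the (p (- x))"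
  unfolding reflect_def by auto

lemma reflect_map_le: "p \<subseteq>\<^sub>m q \<Longrightarrow> reflect p \<subseteq>\<^sub>m reflect q"
  unfolding map_le_def reflect_def dom_def by auto

lemma reflect_map_le_iff: "reflect p \<subseteq>\<^sub>m reflect q \<longleftrightarrow> p \<subseteq>\<^sub>m q"
  using reflect_map_le[of "reflect p" "reflect q"] reflect_map_le by auto

lemma fin_piso_reflect:
  assumes "fin_piso p" shows "fin_piso (reflect p)"
proof -
  have "dom (reflect p) = uminus ` dom p"
    by (rule set_eqI) (simp add: in_uminus_image dom_reflect)
  then have "finite (dom (reflect p))" using assms unfolding fin_piso_def by simp
  moreover have "the (reflect p x) < the (reflect p y)"
    if "x \<in> dom (reflect p)" "y \<in> dom (reflect p)" "x < y" for x y
    using that assms unfolding fin_piso_def by (simp add: dom_reflect the_reflect)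
  ultimately show ?thesis unfolding fin_piso_def by blast
qed

lemma pinv_reflect:
  assumes "fin_piso p" "- x \<in> ran p"
  shows "pinv (reflect p) x = - pinv p (- x)"
  using fin_piso_pinv[OF assms] by (intro pinv_eqI fin_piso_reflect assms(1)) (simp add: reflect_def)

lemma parity_reflect:
  assumes "fin_piso p" "- x \<in> DR p"
  shows "parity (reflect p) x = - parity p (- x)"
proof (cases "- x \<in> dom p")
  case True
  then show ?thesis
    unfolding parity_def by (simp add: dom_reflect the_reflect flip: sgn_minus)
next
  case False
  then have "- x \<in> ran p" using assms(2) unfolding DR_def by blast
  then show ?thesis using False unfolding parity_def
    by (simp add: dom_reflect pinv_reflect[OF assms(1)] add.commute flip: sgn_minus)
qed

lemma has_par_reflect:
  "fin_piso p \<Longrightarrow> has_par (reflect p) s x \<longleftrightarrow> has_par p (- s) (- x)"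
  unfolding has_par_def by (auto simp: DR_reflect parity_reflect)

lemma p_related_reflect:
  assumes "fin_piso p"
  shows "p_related (reflect p) (- a) (- b) \<longleftrightarrow> p_related p a b"
  unfolding p_related_def
  by (simp add: dom_reflect ran_reflect has_par_reflect[OF assms] the_reflect
      pinv_reflect[OF assms] cong: conj_cong) (simp only: conj_ac disj_ac)

lemma equivclp_involution:
  assumes "\<And>x. f (f x) = x"
  shows "equivclp (\<lambda>x y. r (f x) (f y)) a b \<longleftrightarrow> equivclp r (f a) (f b)"
proof -
  have *: "equivclp r' (f a) (f b)" if "equivclp (\<lambda>x y. r' (f x) (f y)) a b" for r' a b
    using that by induction (auto intro: equivclp_into_equivclp)
  show ?thesis
    using *[of r] *[of "\<lambda>x y. r (f x) (f y)" "f a" "f b"] assms by auto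
qed

lemma orbital_reflect:
  assumes "fin_piso p"
  shows "orbital (reflect p) a = uminus ` orbital p (- a)"
proof -
  have "p_related (reflect p) = (\<lambda>x y. p_related p (- x) (- y))"
    using p_related_reflect[OF assms] by (metis minus_minus)
  then have "equivclp (p_related (reflect p)) a b \<longleftrightarrow> equivclp (p_related p) (- a) (- b)" for b
    using equivclp_involution[of uminus "p_related p" a b] by (simp only: minus_minus)
  then show ?thesis
    unfolding orbital_def by (intro set_eqI) (simp add: in_uminus_image)
qed

lemma colored_orbitals_reflect:
  "fin_piso p \<Longrightarrow> colored_orbitals (reflect p) = image uminus ` colored_orbitals p"
  unfolding colored_orbitals_def
  by (auto simp: orbital_reflect DR_reflect) (metis minus_minus)

lemma orbital_parity_reflect:
  assumes "fin_piso p"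
  shows "orbital_parity (reflect p) (uminus ` Ob) s \<longleftrightarrow> orbital_parity p Ob (- s)"
proof -
  have "orbital_parity (reflect p) (uminus ` Ob) s \<longleftrightarrow>
      (\<forall>b\<in>Ob \<inter> DR p. parity (reflect p) (- b) = s)"
    unfolding orbital_parity_def by (auto simp: DR_reflect)
  also have "\<dots> \<longleftrightarrow> orbital_parity p Ob (- s)"
    unfolding orbital_parity_def by (auto simp: parity_reflect[OF assms])
  finally show ?thesis .
qed

lemma bad_pair_reflect:
  assumes "fin_piso p"
  shows "bad_pair (reflect p) a a' \<longleftrightarrow> bad_pair p (- a') (- a)"
  unfolding bad_pair_def colored_orbitals_reflect[OF assms]
  by (simp add: DR_reflect dom_reflect ran_reflect orbital_parity_reflect[OF assms]
      in_uminus_image le_minus_iff minus_le_iff) (simp only: conj_ac disj_ac)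

lemma Pgd_reflect:
  assumes "p \<in> Pgd s"
  shows "reflect p \<in> Pgd (- s)"
proof -
  have p: "fin_piso p" "\<forall>a\<in>DR p. parity p a = s"
    using assms unfolding Pgd_def Psgn_iff by auto
  have "reflect p \<in> Psgn (- s)"
    using p fin_piso_reflect parity_reflect unfolding Psgn_iff by (simp add: DR_reflect)
  moreover have "card (colored_orbitals (reflect p)) = card (colored_orbitals p)"
    unfolding colored_orbitals_reflect[OF p(1)]
    by (intro card_image inj_onI) (simp add: inj_image_eq_iff)
  moreover have "\<not> bad_pair (reflect p) a a'" for a a'
    using assms bad_pair_reflect[OF p(1)] unfolding Pgd_def by blast
  ultimately show ?thesis using assms unfolding Pgd_def by simp
qed

lemma Psgn_reflect:
  assumes "p \<in> Psgn s"
  shows "reflect p \<in> Psgn (- s)"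
  using assms fin_piso_reflect parity_reflect unfolding Psgn_iff by (simp add: DR_reflect)

lemma reflect_image_Psgn: "Psgn (- s) = reflect ` Psgn s"
  using Psgn_reflect[of _ s] Psgn_reflect[of _ "- s"] by (auto intro: image_eqI[of _ _ "reflect _"])

lemma reflect_image_Pgd: "Pgd (- s) = reflect ` Pgd s"
  using Pgd_reflect[of _ s] Pgd_reflect[of _ "- s"] by (auto intro: image_eqI[of _ _ "reflect _"])

definition reflect_aut :: "(rat \<Rightarrow> rat) \<Rightarrow> rat \<Rightarrow> rat" where
  "reflect_aut \<alpha> x = - \<alpha> (- x)"

lemma is_aut_reflect_aut:
  assumes "is_aut \<alpha>" shows "is_aut (reflect_aut \<alpha>)"
proof -
  have "reflect_aut (inv \<alpha>) \<circ> reflect_aut \<alpha> = id" "reflect_aut \<alpha> \<circ> reflect_aut (inv \<alpha>) = id"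
    unfolding reflect_aut_def by (auto simp: aut_inv_f_f[OF assms] aut_f_inv_f[OF assms])
  then have "bij (reflect_aut \<alpha>)" using o_bij by blast
  moreover have "strict_mono (reflect_aut \<alpha>)"
    unfolding reflect_aut_def strict_mono_def by (simp add: aut_less_iff[OF assms])
  ultimately show ?thesis unfolding is_aut_def by blast
qed

lemma aut_apply_reflect:
  assumes "is_aut \<alpha>"
  shows "aut_apply (reflect_aut \<alpha>) (reflect p) = reflect (aut_apply \<alpha> p)"
proof -
  have "inv (reflect_aut \<alpha>) = reflect_aut (inv \<alpha>)"
    by (rule inv_equality) (simp_all add: reflect_aut_def aut_inv_f_f[OF assms] aut_f_inv_f[OF assms])
  then show ?thesis
    unfolding aut_apply_def reflect_def
    by (simp add: fun_eq_iff option.map_comp comp_def reflect_aut_def)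
qed

lemma cofinal_in_reflect: "cofinal_in Q P \<Longrightarrow> cofinal_in (reflect ` Q) (reflect ` P)"
  unfolding cofinal_in_def by (auto simp: reflect_map_le_iff)

lemma amalgamation_reflect:
  assumes "amalgamation Q" shows "amalgamation (reflect ` Q)"
  unfolding amalgamation_def
proof (intro ballI impI)
  fix p0' p1' p2' assume "p0' \<in> reflect ` Q" "p1' \<in> reflect ` Q" "p2' \<in> reflect ` Q"
    and le: "p0' \<subseteq>\<^sub>m p1' \<and> p0' \<subseteq>\<^sub>m p2'"
  then obtain p0 p1 p2 where p: "p0 \<in> Q" "p1 \<in> Q" "p2 \<in> Q"
    and p': "p0' = reflect p0" "p1' = reflect p1" "p2' = reflect p2" by blast
  then have "p0 \<subseteq>\<^sub>m p1 \<and> p0 \<subseteq>\<^sub>m p2" using le reflect_map_le_iff by auto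
  then obtain p3 \<alpha> where p3: "p3 \<in> Q" "is_aut \<alpha>" "\<forall>x\<in>DR p0. \<alpha> x = x"
    "p1 \<subseteq>\<^sub>m p3" "aut_apply \<alpha> p2 \<subseteq>\<^sub>m p3"
    using assms[unfolded amalgamation_def, rule_format, OF p] by blast
  show "\<exists>p3\<in>reflect ` Q. \<exists>\<alpha>. is_aut \<alpha> \<and> (\<forall>x\<in>DR p0'. \<alpha> x = x) \<and>
      p1' \<subseteq>\<^sub>m p3 \<and> aut_apply \<alpha> p2' \<subseteq>\<^sub>m p3"
  proof (intro bexI exI conjI)
    show "is_aut (reflect_aut \<alpha>)" using is_aut_reflect_aut[OF p3(2)] .
    show "\<forall>x\<in>DR p0'. reflect_aut \<alpha> x = x"
      using p3(3) p'(1) by (simp add: DR_reflect reflect_aut_def)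
    show "p1' \<subseteq>\<^sub>m reflect p3" using reflect_map_le[OF p3(4)] p'(2) by simp
    show "aut_apply (reflect_aut \<alpha>) p2' \<subseteq>\<^sub>m reflect p3"
      using reflect_map_le[OF p3(5)] p'(3) aut_apply_reflect[OF p3(2)] by simp
  qed (use p3(1) in blast)
qed

theorem proposition4p1:
  shows "cofinal_in Pplus_gd Pplus \<and> amalgamation Pplus_gd \<and>
         cofinal_in Pminus_gd Pminus \<and> amalgamation Pminus_gd"
proof -
  have "cofinal_in Pplus_gd Pplus"
    unfolding cofinal_in_def using Pplus_gd_cofinal by (auto simp: Pgd_def)
  moreover have "amalgamation Pplus_gd"
    unfolding amalgamation_def using Pplus_gd_amalgamation by blast
  moreover have "Pminus_gd = reflect ` Pplus_gd" "Pminus = reflect ` Pplus"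
    using reflect_image_Pgd[of 1] reflect_image_Psgn[of 1] by simp_all
  ultimately show ?thesis using cofinal_in_reflect amalgamation_reflect by simp
qed

end
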